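(* Let $L$ be a nondegenerate $\alpha$-semi-stable $\mathds R^d$-valued Lévy process. Then: (a) If $0<\alpha<1$, then $L$ has Sobolev index $\alpha$ if and only if $L$ is strictly $\alpha$-semi-stable. (b) If $1<\alpha\le2$, then $L$ has Sobolev index $\alpha$. (c) If $L$ is real-valued and strictly $\alpha$-stable with $\alpha=1$ and has Sobolev index $1$, then its symbol is of the form $A(u)=c|u|+i\tau u$ with $c>0$ and $\tau\in\mathds R$. (d) If $L$ is real-valued and $\alpha$-stable with $\alpha=1$, then $L$ has Sobolev index $1$ if and only if $L$ is strictly $1$-stable.
   Context: For a Lévy process with characteristics $(b,\sigma,F)$ w.r.t. a truncation function $h$, the symbol is $A(\xi)=\frac12\langle\xi,\sigma\xi\rangle+i\langle\xi,b\rangle-\int(e^{-i\langle\xi,y\rangle}-1+i\langle\xi,h(y)\rangle)F(dy)$, so $Ee^{i\langle\xi,L_t\rangle}=e^{-tA(-\xi)}$. A Lévy process is semi-stable (resp. stable) if for some (resp. every) $0<a\ne1$ there exist $b>0$ and $c\in\mathds R^d$ with $aA(u)=A(bu)+i\langle c,u\rangle$ for all $u$. Let $\Gamma$ be the set of $a>0$ for which such $b,c$ exist; the process is $\alpha$-semi-stable if it is semi-stable and $a=b^\alpha$ for all $a\in\Gamma$, and $\alpha$-stable if it is stable and $a=b^\alpha$ for all $a>0$. It is strictly (semi-)stable, resp. strictly $\alpha$-(semi-)stable, if in addition the relation holds with $c=0$. $L$ is nondegenerate if for some (equivalently every) $t>0$ the support of $P^{L_t}$ is not contained in any affine hyperplane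 of $\mathds R^d$. The symbol has Sobolev index $\alpha\in(0,2]$ if there are $0\le\beta<\alpha$, $C_1,C_3\ge0$, $C_2>0$ with $|A(\xi)|\le C_1(1+|\xi|^2)^{\alpha/2}$ and $\Re(A(\xi))\ge C_2|\xi|^\alpha-C_3(1+|\xi|^2)^{\beta/2}$ for all $\xi$. *)

theory Defs
  imports "HOL-Probability.Probability"
begin

definition levy_process :: "'w measure \<Rightarrow> (real \<Rightarrow> 'w \<Rightarrow> 'a::euclidean_space) \<Rightarrow> bool" where
  "levy_process M L \<longleftrightarrow>
     prob_space M \<and>
     (\<forall>t\<ge>0. L t \<in> borel_measurable M) \<and>
     (AE \<omega> in M. L 0 \<omega> = 0) \<and>
     (\<forall>(n::nat) (t::nat \<Rightarrow> real). (\<forall>k. 0 \<le> t k) \<and> mono t \<longrightarrow>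
        prob_space.indep_vars M (\<lambda>_. borel) (\<lambda>k \<omega>. L (t (Suc k)) \<omega> - L (t k) \<omega>) {..<n}) \<and>
     (\<forall>s t. 0 \<le> s \<and> s \<le> t \<longrightarrow>
        distr M borel (\<lambda>\<omega>. L t \<omega> - L s \<omega>) = distr M borel (L (t - s))) \<and>
     (\<forall>t\<ge>0. \<forall>e>0. ((\<lambda>s. measure M {\<omega> \<in> space M. dist (L s \<omega>) (L t \<omega>) > e}) \<longlongrightarrow> 0)
        (at t within {0..}))"

definition truncation_function :: "('a::euclidean_space \<Rightarrow> 'a) \<Rightarrow> bool" where
  "truncation_function h \<longleftrightarrow> h \<in> borel_measurable borel \<and> bounded (range h) \<and>
     (\<exists>r>0. \<forall>y. norm y < r \<longrightarrow> h y = y)"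

definition covariance_operator :: "('a::euclidean_space \<Rightarrow> 'a) \<Rightarrow> bool" where
  "covariance_operator \<sigma> \<longleftrightarrow> linear \<sigma> \<and> (\<forall>x y. \<sigma> x \<bullet> y = x \<bullet> \<sigma> y) \<and> (\<forall>x. 0 \<le> x \<bullet> \<sigma> x)"

definition levy_measure :: "'a::euclidean_space measure \<Rightarrow> bool" where
  "levy_measure F \<longleftrightarrow> sets F = sets borel \<and> emeasure F {0} = 0 \<and>
     (\<integral>\<^sup>+ y. ennreal (min 1 ((norm y)\<^sup>2)) \<partial>F) < \<infinity>"

definition levy_sym :: "('a::euclidean_space \<Rightarrow> 'a) \<Rightarrow> 'a \<Rightarrow> ('a \<Rightarrow> 'a) \<Rightarrow> 'a measure \<Rightarrow> 'a \<Rightarrow> complex" where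
  "levy_sym h b \<sigma> F \<xi> =
     complex_of_real ((\<xi> \<bullet> \<sigma> \<xi>) / 2) + \<i> * complex_of_real (\<xi> \<bullet> b)
     - (CLINT y|F. exp (- \<i> * complex_of_real (\<xi> \<bullet> y)) - 1 + \<i> * complex_of_real (\<xi> \<bullet> h y))"

definition levy_symbol :: "'w measure \<Rightarrow> (real \<Rightarrow> 'w \<Rightarrow> 'a::euclidean_space) \<Rightarrow> ('a \<Rightarrow> complex) \<Rightarrow> bool" where
  "levy_symbol M L A \<longleftrightarrow>
     (\<exists>h b \<sigma> F. truncation_function h \<and> covariance_operator \<sigma> \<and> levy_measure F \<and>
        A = levy_sym h b \<sigma> F \<and>
        (\<forall>t\<ge>0. \<forall>\<xi>. (CLINT \<omega>|M. exp (\<i> * complex_of_real (\<xi> \<bullet> L t \<omega>)))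
                      = exp (- complex_of_real t * A (- \<xi>))))"

definition measure_support :: "'a::metric_space measure \<Rightarrow> 'a set" where
  "measure_support \<mu> = {x. \<forall>e>0. emeasure \<mu> (ball x e) > 0}"

definition nondegenerate :: "'w measure \<Rightarrow> (real \<Rightarrow> 'w \<Rightarrow> 'a::euclidean_space) \<Rightarrow> bool" where
  "nondegenerate M L \<longleftrightarrow> (\<exists>t>0. \<not> (\<exists>a c. a \<noteq> 0 \<and>
      measure_support (distr M borel (L t)) \<subseteq> {x. a \<bullet> x = c}))"

definition stab_rel :: "('a::euclidean_space \<Rightarrow> complex) \<Rightarrow> real \<Rightarrow> real \<Rightarrow> 'a \<Rightarrow> bool" where
  "stab_rel A a b c \<longleftrightarrow> (\<forall>u. complex_of_real a * A u = A (b *\<^sub>R u) + \<i> * complex_of_real (c \<bullet> u))"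

definition stab_Gamma :: "('a::euclidean_space \<Rightarrow> complex) \<Rightarrow> real set" where
  "stab_Gamma A = {a. a > 0 \<and> (\<exists>b>0. \<exists>c. stab_rel A a b c)}"

definition semi_stable :: "('a::euclidean_space \<Rightarrow> complex) \<Rightarrow> bool" where
  "semi_stable A \<longleftrightarrow> (\<exists>a\<in>stab_Gamma A. a \<noteq> 1)"

definition stable :: "('a::euclidean_space \<Rightarrow> complex) \<Rightarrow> bool" where
  "stable A \<longleftrightarrow> (\<forall>a. 0 < a \<and> a \<noteq> 1 \<longrightarrow> a \<in> stab_Gamma A)"

definition alpha_semi_stable :: "real \<Rightarrow> ('a::euclidean_space \<Rightarrow> complex) \<Rightarrow> bool" where
  "alpha_semi_stable \<alpha> A \<longleftrightarrow> semi_stable A \<and>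
     (\<forall>a b c. a > 0 \<and> b > 0 \<and> stab_rel A a b c \<longrightarrow> a = b powr \<alpha>)"

definition alpha_stable :: "real \<Rightarrow> ('a::euclidean_space \<Rightarrow> complex) \<Rightarrow> bool" where
  "alpha_stable \<alpha> A \<longleftrightarrow> stable A \<and>
     (\<forall>a b c. a > 0 \<and> b > 0 \<and> stab_rel A a b c \<longrightarrow> a = b powr \<alpha>)"

definition strictly_semi_stable :: "('a::euclidean_space \<Rightarrow> complex) \<Rightarrow> bool" where
  "strictly_semi_stable A \<longleftrightarrow> (\<exists>a b. a > 0 \<and> a \<noteq> 1 \<and> b > 0 \<and> stab_rel A a b 0)"

definition strictly_stable :: "('a::euclidean_space \<Rightarrow> complex) \<Rightarrow> bool" where
  "strictly_stable A \<longleftrightarrow> (\<forall>a. 0 < a \<and> a \<noteq> 1 \<longrightarrow> (\<exists>b>0. stab_rel A a b 0))"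

definition strictly_alpha_semi_stable :: "real \<Rightarrow> ('a::euclidean_space \<Rightarrow> complex) \<Rightarrow> bool" where
  "strictly_alpha_semi_stable \<alpha> A \<longleftrightarrow> alpha_semi_stable \<alpha> A \<and> strictly_semi_stable A"

definition strictly_alpha_stable :: "real \<Rightarrow> ('a::euclidean_space \<Rightarrow> complex) \<Rightarrow> bool" where
  "strictly_alpha_stable \<alpha> A \<longleftrightarrow> alpha_stable \<alpha> A \<and> strictly_stable A"

definition sobolev_index :: "real \<Rightarrow> ('a::euclidean_space \<Rightarrow> complex) \<Rightarrow> bool" where
  "sobolev_index \<alpha> A \<longleftrightarrow> 0 < \<alpha> \<and> \<alpha> \<le> 2 \<and>
     (\<exists>\<beta> C1 C2 C3. 0 \<le> \<beta> \<and> \<beta> < \<alpha> \<and> C1 \<ge> 0 \<and> C2 > 0 \<and> C3 \<ge> 0 \<and>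
        (\<forall>\<xi>. cmod (A \<xi>) \<le> C1 * (1 + (norm \<xi>)\<^sup>2) powr (\<alpha> / 2) \<and>
              Re (A \<xi>) \<ge> C2 * norm \<xi> powr \<alpha> - C3 * (1 + (norm \<xi>)\<^sup>2) powr (\<beta> / 2)))"

end

theory Submission
  imports Defs
begin

text \<open>Semi-stability provides \<open>b > 1\<close> and \<open>c\<close> with \<open>b^\<alpha> A(u) = A(b u) + i\<langle>c,u\<rangle>\<close>.
  Hence \<open>Re A\<close> is homogeneous of degree \<open>\<alpha>\<close> under scaling by \<open>b\<close>, and nondegeneracy makes it
  positive off the origin; comparing with its minimum on the annulus \<open>1 \<le> |u| \<le> b\<close> gives the lower
  Sobolev bound. For \<open>\<alpha> \<noteq> 1\<close> the drift is absorbed: \<open>A(u) + i\<langle>d,u\<rangle>\<close> with \<open>d = c/(b - b^\<alpha>)\<close>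
  is exactly homogeneous, so \<open>|A(u)| \<le> C|u|^\<alpha> + |d||u|\<close>, which is of order \<open>|u|^\<alpha>\<close> when \<open>c = 0\<close>
  or \<open>\<alpha> > 1\<close>. Conversely, iterating the scaling relation \<open>n\<close> times produces at \<open>u = c\<close> a drift term
  of size at least \<open>n b^((n-1)\<alpha>) |c|^2\<close>, whereas an upper bound of order \<open>(1 + |u|^2)^(\<alpha>/2)\<close> with
  \<open>\<alpha> \<le> 1\<close> only allows \<open>b^(n\<alpha>)\<close>; hence \<open>c = 0\<close>. For \<open>\<alpha> = 1\<close> on the line, strict stability
  makes \<open>A\<close> positively homogeneous, and conjugate symmetry then forces \<open>A(u) = c|u| + i\<tau>u\<close>.\<close>

lemma norm_iexp_sub_linear_le: "cmod (exp (\<i> * complex_of_real x) - 1 - \<i> * complex_of_real x) \<le> x\<^sup>2 / 2"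
  using iexp_approx1[of x 1] by (simp add: algebra_simps power2_eq_square)

lemma norm_levy_integrand_le:
  fixes h :: "'a::euclidean_space \<Rightarrow> 'a"
  assumes r: "0 < r" "r \<le> 1" "\<And>y. norm y < r \<Longrightarrow> h y = y"
    and H: "\<And>y. norm (h y) \<le> H" and R: "norm \<xi> \<le> R"
  shows "cmod (exp (- \<i> * complex_of_real (\<xi> \<bullet> y)) - 1 + \<i> * complex_of_real (\<xi> \<bullet> h y))
     \<le> max (R\<^sup>2 / 2) ((2 + R * H) / r\<^sup>2) * min 1 ((norm y)\<^sup>2)"
    (is "cmod ?g \<le> ?C * ?w")
proof (cases "norm y < r")
  case True
  have "?g = exp (\<i> * complex_of_real (- (\<xi> \<bullet> y))) - 1 - \<i> * complex_of_real (- (\<xi> \<bullet> y))"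
    using r(3)[OF True] by simp
  then have "cmod ?g \<le> (\<xi> \<bullet> y)\<^sup>2 / 2"
    by (metis norm_iexp_sub_linear_le power2_minus)
  also have "\<dots> \<le> (R * norm y)\<^sup>2 / 2"
  proof -
    have "\<bar>\<xi> \<bullet> y\<bar> \<le> R * norm y"
      using Cauchy_Schwarz_ineq2[of \<xi> y] R by (meson mult_right_mono norm_ge_zero order_trans)
    then have "\<bar>\<xi> \<bullet> y\<bar>\<^sup>2 \<le> (R * norm y)\<^sup>2"
      by (intro power_mono) auto
    then show ?thesis
      by simp
  qed
  also have "\<dots> = R\<^sup>2 / 2 * ?w"
    using True r by (simp add: power_mult_distrib power_le_one)
  also have "\<dots> \<le> ?C * ?w"
    by (intro mult_right_mono) auto
  finally show ?thesis .
next
  case False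
  have R0: "0 \<le> R" and H0: "0 \<le> H"
    using R H[of 0] norm_ge_zero order_trans by blast+
  have "\<bar>\<xi> \<bullet> h y\<bar> \<le> R * H"
    using Cauchy_Schwarz_ineq2[of \<xi> "h y"] R H[of y] R0 by (meson mult_mono norm_ge_zero order_trans)
  then have "cmod ?g \<le> 2 + R * H"
    using norm_triangle_ineq4[of "exp (- \<i> * complex_of_real (\<xi> \<bullet> y))" 1]
      norm_triangle_ineq[of "exp (- \<i> * complex_of_real (\<xi> \<bullet> y)) - 1" "\<i> * complex_of_real (\<xi> \<bullet> h y)"]
    by (simp add: norm_mult)
  also have "\<dots> \<le> (2 + R * H) / r\<^sup>2 * ?w"
  proof -
    have "r\<^sup>2 \<le> ?w"
      using False r by (simp add: power_mono power_le_one)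
    then have "(2 + R * H) / r\<^sup>2 * r\<^sup>2 \<le> (2 + R * H) / r\<^sup>2 * ?w"
      using R0 H0 by (intro mult_left_mono) auto
    then show ?thesis
      using r by simp
  qed
  also have "\<dots> \<le> ?C * ?w"
    by (intro mult_right_mono) auto
  finally show ?thesis .
qed

lemma continuous_levy_sym:
  fixes h :: "'a::euclidean_space \<Rightarrow> 'a"
  assumes "truncation_function h" and "covariance_operator \<sigma>" and "levy_measure F"
  shows "continuous_on UNIV (levy_sym h b \<sigma> F)"
proof -
  have [measurable]: "h \<in> borel_measurable borel" and "bounded (range h)"
    and "\<exists>r>0. \<forall>y. norm y < r \<longrightarrow> h y = y"
    using assms(1) unfolding truncation_function_def by auto
  then obtain r0 H where r0: "0 < r0" "\<And>y. norm y < r0 \<Longrightarrow> h y = y" and H: "\<And>y. norm (h y) \<le> H"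
    unfolding bounded_iff by auto
  define r where "r = min r0 1"
  have r: "0 < r" "r \<le> 1" "\<And>y. norm y < r \<Longrightarrow> h y = y"
    using r0 by (auto simp: r_def)
  have sets_F: "sets F = sets borel" and "(\<integral>\<^sup>+ y. ennreal (min 1 ((norm y)\<^sup>2)) \<partial>F) < \<infinity>"
    using assms(3) unfolding levy_measure_def by auto
  then have integrable_weight: "integrable F (\<lambda>y. min 1 ((norm y)\<^sup>2))"
    by (intro integrableI_nonneg) (auto simp: measurable_cong_sets[OF sets_F refl])
  define g where "g \<xi> y = exp (- \<i> * complex_of_real (\<xi> \<bullet> y)) - 1 + \<i> * complex_of_real (\<xi> \<bullet> h y)"
    for \<xi> y
  have g_measurable: "g \<xi> \<in> borel_measurable F" for \<xi>
    unfolding g_def measurable_cong_sets[OF sets_F refl] by measurable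
  have "continuous_on UNIV (\<lambda>\<xi>. CLINT y|F. g \<xi> y)"
  proof (rule continuous_on_sequentiallyI)
    fix u :: "nat \<Rightarrow> 'a" and \<xi> assume lim: "u \<longlonglongrightarrow> \<xi>"
    then obtain R where R: "\<And>n. norm (u n) \<le> R"
      using convergent_imp_Bseq[of u] unfolding Bseq_def convergent_def by auto
    define C where "C = max (R\<^sup>2 / 2) ((2 + R * H) / r\<^sup>2)"
    show "(\<lambda>n. CLINT y|F. g (u n) y) \<longlonglongrightarrow> (CLINT y|F. g \<xi> y)"
    proof (rule integral_dominated_convergence[where w = "\<lambda>y. C * min 1 ((norm y)\<^sup>2)"])
      show "AE y in F. (\<lambda>n. g (u n) y) \<longlonglongrightarrow> g \<xi> y"
        unfolding g_def by (intro AE_I2 tendsto_intros lim)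
      show "AE y in F. norm (g (u n) y) \<le> C * min 1 ((norm y)\<^sup>2)" for n
        unfolding g_def C_def by (intro AE_I2 norm_levy_integrand_le[OF r H R])
    qed (use integrable_weight g_measurable in auto)
  qed
  moreover have "continuous_on UNIV \<sigma>"
    using assms(2) unfolding covariance_operator_def by (auto intro: linear_continuous_on simp: linear_conv_bounded_linear)
  ultimately show ?thesis
    unfolding levy_sym_def g_def[symmetric] by (intro continuous_intros) auto
qed

lemma levy_sym_uminus:
  assumes "covariance_operator \<sigma>"
  shows "levy_sym h b \<sigma> F (- \<xi>) = cnj (levy_sym h b \<sigma> F \<xi>)"
proof -
  have "\<sigma> (- \<xi>) = - \<sigma> \<xi>"
    using assms unfolding covariance_operator_def by (auto intro: linear_neg)
  then show ?thesis
    unfolding levy_sym_def by (simp add: exp_cnj flip: Bochner_Integration.integral_cnj)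
qed

lemma levy_symbol_continuous: "levy_symbol M L A \<Longrightarrow> continuous_on UNIV A"
  unfolding levy_symbol_def using continuous_levy_sym by blast

lemma levy_symbol_uminus: "levy_symbol M L A \<Longrightarrow> A (- \<xi>) = cnj (A \<xi>)"
  unfolding levy_symbol_def using levy_sym_uminus by metis

lemma levy_symbol_charf:
  "levy_symbol M L A \<Longrightarrow> 0 \<le> t
    \<Longrightarrow> (CLINT \<omega>|M. exp (\<i> * complex_of_real (\<xi> \<bullet> L t \<omega>))) = exp (- complex_of_real t * A (- \<xi>))"
  unfolding levy_symbol_def by blast

section \<open>The scaling relation\<close>

lemma Re_stab_rel: "stab_rel A a b c \<Longrightarrow> Re (A (b *\<^sub>R u)) = a * Re (A u)"
  unfolding stab_rel_def by (drule spec[of _ u], drule arg_cong[of _ _ Re]) simp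

lemma stab_rel_inverse:
  assumes "stab_rel A a b c" and "0 < a" and "0 < b"
  shows "stab_rel A (1 / a) (1 / b) (- (1 / (a * b)) *\<^sub>R c)"
  unfolding stab_rel_def
proof
  fix u
  have "complex_of_real a * A ((1 / b) *\<^sub>R u) = A (b *\<^sub>R (1 / b) *\<^sub>R u) + \<i> * complex_of_real (c \<bullet> (1 / b) *\<^sub>R u)"
    using assms(1) unfolding stab_rel_def by blast
  then show "complex_of_real (1 / a) * A u
      = A ((1 / b) *\<^sub>R u) + \<i> * complex_of_real ((- (1 / (a * b)) *\<^sub>R c) \<bullet> u)"
    using assms(2,3) by (simp add: field_simps)
qed

lemma stab_rel_normalize:
  assumes "stab_rel A (b powr \<alpha>) b c" and "0 < b" and "b \<noteq> 1"
  obtains b' c' where "1 < b'" and "stab_rel A (b' powr \<alpha>) b' c'" and "c' = 0 \<longleftrightarrow> c = 0"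
proof (cases "1 < b")
  case True
  then show ?thesis using that assms(1) by blast
next
  case False
  then have "1 < 1 / b"
    using assms(2,3) by (simp add: field_simps)
  moreover have "stab_rel A ((1 / b) powr \<alpha>) (1 / b) (- (1 / (b powr \<alpha> * b)) *\<^sub>R c)"
    using stab_rel_inverse[OF assms(1) _ assms(2)] assms(2) by (simp add: powr_divide)
  moreover have "- (1 / (b powr \<alpha> * b)) \<noteq> 0"
    using assms(2) by simp
  ultimately show ?thesis
    using that by simp
qed

lemma alpha_semi_stableE:
  assumes "alpha_semi_stable \<alpha> A"
  obtains b c where "1 < b" and "stab_rel A (b powr \<alpha>) b c"
proof -
  obtain a b c where "0 < a" "a \<noteq> 1" "0 < b" "stab_rel A a b c" "a = b powr \<alpha>"
    using assms unfolding alpha_semi_stable_def semi_stable_def stab_Gamma_def by blast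
  moreover have "b \<noteq> 1"
    using calculation by auto
  ultimately show ?thesis
    using stab_rel_normalize[of A b \<alpha> c] that by auto
qed

lemma strictly_alpha_semi_stableE:
  assumes "strictly_alpha_semi_stable \<alpha> A"
  obtains b where "1 < b" and "stab_rel A (b powr \<alpha>) b 0"
proof -
  obtain a b where "0 < a" "a \<noteq> 1" "0 < b" "stab_rel A a b 0"
    using assms unfolding strictly_alpha_semi_stable_def strictly_semi_stable_def by blast
  moreover have "a = b powr \<alpha>"
    using assms calculation unfolding strictly_alpha_semi_stable_def alpha_semi_stable_def by blast
  moreover have "b \<noteq> 1"
    using calculation by auto
  ultimately show ?thesis
    using stab_rel_normalize[of A b \<alpha> 0] that by auto
qed

section \<open>Positivity of the real part\<close>

lemma (in prob_space) AE_eq_integral_if_norm_integral_eq_1: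
  fixes Z :: "'a \<Rightarrow> complex"
  assumes Z_measurable: "Z \<in> borel_measurable M" and Z_norm: "\<And>\<omega>. cmod (Z \<omega>) = 1"
    and integral_norm: "cmod (integral\<^sup>L M Z) = 1"
  shows "AE \<omega> in M. Z \<omega> = integral\<^sup>L M Z"
proof -
  define w where "w = integral\<^sup>L M Z"
  have w: "cnj w * w = 1"
    using integral_norm unfolding w_def by (metis complex_norm_square mult.commute of_real_1 power_one)
  have norm_Zw: "cmod (Z \<omega> * cnj w) = 1" for \<omega>
    using Z_norm integral_norm by (simp add: norm_mult w_def)
  define f where "f \<omega> = 1 - Re (Z \<omega> * cnj w)" for \<omega>
  have f_bounds: "0 \<le> f \<omega> \<and> f \<omega> \<le> 2" for \<omega>
    using abs_Re_le_cmod[of "Z \<omega> * cnj w"] norm_Zw[of \<omega>] unfolding f_def by auto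
  have "integrable M Z"
    using Z_norm Z_measurable by (intro integrable_const_bound[where B=1]) auto
  then have "integral\<^sup>L M f = 1 - Re (w * cnj w)"
    unfolding f_def w_def by (simp add: prob_space)
  also have "\<dots> = 0"
    using w by (simp add: mult.commute)
  finally have "AE \<omega> in M. f \<omega> = 0"
    using f_bounds Z_measurable unfolding f_def
    by (subst integral_nonneg_eq_0_iff_AE[symmetric])
       (auto intro!: integrable_const_bound[where B=2] simp: f_def[symmetric])
  then show ?thesis
  proof (rule AE_mp, intro AE_I2 impI)
    fix \<omega> assume "f \<omega> = 0"
    then have "Re (Z \<omega> * cnj w) = 1" by (simp add: f_def)
    moreover from this have "Im (Z \<omega> * cnj w) = 0"
      using norm_Zw[of \<omega>] by (metis cmod_power2 add_cancel_right_right zero_eq_power2)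
    ultimately have "Z \<omega> * cnj w * w = w"
      by (simp add: complex_eq_iff)
    then show "Z \<omega> = integral\<^sup>L M Z"
      using w unfolding w_def[symmetric] by (metis mult.assoc mult.right_neutral)
  qed
qed

lemma eq_if_iexp_mult_eq:
  fixes x y :: real
  assumes "\<theta> \<longlonglongrightarrow> 0" and "\<And>n. \<theta> n \<noteq> 0"
    and "\<And>n. exp (\<i> * complex_of_real (\<theta> n * x)) = exp (\<i> * complex_of_real (\<theta> n * y))"
  shows "x = y"
proof (rule ccontr)
  assume "x \<noteq> y"
  then have "0 < 2 * pi / \<bar>x - y\<bar>"
    by simp
  then obtain n where "\<forall>m\<ge>n. norm (\<theta> m - 0) < 2 * pi / \<bar>x - y\<bar>"
    using LIMSEQ_D[OF assms(1)] by blast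
  then have n: "\<bar>\<theta> n\<bar> < 2 * pi / \<bar>x - y\<bar>"
    by simp
  obtain k :: int
    where "\<i> * complex_of_real (\<theta> n * x) = \<i> * complex_of_real (\<theta> n * y) + of_int (2 * k) * pi * \<i>"
    using exp_eq[THEN iffD1, OF assms(3)[of n]] by blast
  from arg_cong[OF this, of Im] have k: "\<theta> n * (x - y) = 2 * pi * k"
    by (simp add: algebra_simps)
  then have "k \<noteq> 0"
    using assms(2)[of n] \<open>x \<noteq> y\<close> by auto
  then have "2 * pi \<le> 2 * pi * \<bar>k\<bar>"
    by simp
  also have "\<dots> = \<bar>\<theta> n * (x - y)\<bar>"
    unfolding k by (simp add: abs_mult)
  also have "\<dots> < 2 * pi"
    using n \<open>x \<noteq> y\<close> by (simp add: abs_mult pos_less_divide_eq)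
  finally show False
    by simp
qed

lemma (in prob_space) AE_const_if_AE_iexp_mult_const:
  fixes X :: "'a \<Rightarrow> real"
  assumes "\<theta> \<longlonglongrightarrow> 0" and "\<And>n. \<theta> n \<noteq> 0"
    and "\<And>n. AE \<omega> in M. exp (\<i> * complex_of_real (\<theta> n * X \<omega>)) = z n"
  shows "\<exists>x. AE \<omega> in M. X \<omega> = x"
proof -
  have AE_all: "AE \<omega> in M. \<forall>n. exp (\<i> * complex_of_real (\<theta> n * X \<omega>)) = z n"
    using assms(3) by (simp add: AE_all_countable)
  have "\<exists>\<omega>\<^sub>0\<in>space M. \<forall>n. exp (\<i> * complex_of_real (\<theta> n * X \<omega>\<^sub>0)) = z n"
  proof (rule ccontr)
    assume "\<not> ?thesis"
    then have "AE \<omega> in M. \<not> (\<forall>n. exp (\<i> * complex_of_real (\<theta> n * X \<omega>)) = z n)"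
      by (auto intro!: AE_I2)
    with AE_all show False
      by (rule AE_contr)
  qed
  then obtain \<omega>\<^sub>0 where \<omega>\<^sub>0: "\<forall>n. exp (\<i> * complex_of_real (\<theta> n * X \<omega>\<^sub>0)) = z n"
    by blast
  from AE_all have "AE \<omega> in M. X \<omega> = X \<omega>\<^sub>0"
    by eventually_elim (use \<omega>\<^sub>0 in \<open>auto intro!: eq_if_iexp_mult_eq[OF assms(1,2)]\<close>)
  then show ?thesis ..
qed

lemma measure_support_distr_subset:
  assumes "Y \<in> borel_measurable M" and "closed S" and "AE \<omega> in M. Y \<omega> \<in> S"
  shows "measure_support (distr M borel Y) \<subseteq> S"
proof
  fix x assume x: "x \<in> measure_support (distr M borel Y)"
  show "x \<in> S"
  proof (rule ccontr)
    assume "x \<notin> S"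
    then obtain e where "0 < e" and e: "ball x e \<subseteq> - S"
      using assms(2) open_contains_ball_eq[of "- S" x] by auto
    have "emeasure (distr M borel Y) (ball x e) = emeasure M {\<omega> \<in> space M. Y \<omega> \<in> ball x e}"
      using assms(1) by (simp add: emeasure_distr vimage_def Int_def conj_commute)
    also have "\<dots> = 0"
      using assms(3) by (intro emeasure_eq_0_AE, eventually_elim) (use e in auto)
    finally show False
      using x \<open>0 < e\<close> unfolding measure_support_def by auto
  qed
qed

lemma Re_levy_symbol_nonneg:
  assumes "levy_process M L" and "levy_symbol M L A"
  shows "0 \<le> Re (A \<xi>)"
proof -
  interpret prob_space M
    using assms(1) unfolding levy_process_def by auto
  have "cmod (CLINT \<omega>|M. exp (\<i> * complex_of_real ((- \<xi>) \<bullet> L 1 \<omega>))) \<le> 1"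
    using integral_norm_bound[of M "\<lambda>\<omega>. exp (\<i> * complex_of_real ((- \<xi>) \<bullet> L 1 \<omega>))"]
    by (simp add: prob_space)
  then have "exp (- Re (A \<xi>)) \<le> 1"
    using levy_symbol_charf[OF assms(2), of 1 "- \<xi>"] by simp
  then show ?thesis
    by simp
qed

lemma AE_inner_const_if_Re_levy_symbol_eq_0:
  assumes lp: "levy_process M L" and ls: "levy_symbol M L A" and "0 \<le> t"
    and "\<theta> \<longlonglongrightarrow> 0" and "\<And>n. \<theta> n \<noteq> 0" and Re_zero: "\<And>n. Re (A (\<theta> n *\<^sub>R \<xi>)) = 0"
  shows "\<exists>x. AE \<omega> in M. \<xi> \<bullet> L t \<omega> = x"
proof -
  interpret prob_space M
    using lp unfolding levy_process_def by auto
  have [measurable]: "L t \<in> borel_measurable M"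
    using lp \<open>0 \<le> t\<close> unfolding levy_process_def by auto
  define Z where "Z n = (\<lambda>\<omega>. exp (\<i> * complex_of_real (\<theta> n * (\<xi> \<bullet> L t \<omega>))))" for n
  have "integral\<^sup>L M (Z n) = exp (- complex_of_real t * cnj (A (\<theta> n *\<^sub>R \<xi>)))" for n
    using levy_symbol_charf[OF ls \<open>0 \<le> t\<close>, of "\<theta> n *\<^sub>R \<xi>"] levy_symbol_uminus[OF ls] by (simp add: Z_def)
  then have "cmod (integral\<^sup>L M (Z n)) = 1" for n
    using Re_zero[of n] by simp
  then have "AE \<omega> in M. exp (\<i> * complex_of_real (\<theta> n * (\<xi> \<bullet> L t \<omega>))) = integral\<^sup>L M (Z n)" for n
    using AE_eq_integral_if_norm_integral_eq_1[of "Z n"] by (simp add: Z_def)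
  then show ?thesis
    by (rule AE_const_if_AE_iexp_mult_const[OF assms(4,5)])
qed

text \<open>If \<open>Re A(\<xi>) = 0\<close>, scaling gives \<open>Re A(b^-n \<xi>) = 0\<close> for all \<open>n\<close>, so \<open>\<langle>\<xi>, L t\<rangle>\<close> has a
  characteristic function of modulus one at frequencies tending to 0 and is a.s. constant, which
  nondegeneracy forbids.\<close>

lemma Re_levy_symbol_pos:
  assumes lp: "levy_process M L" and ls: "levy_symbol M L A" and "nondegenerate M L"
    and "alpha_semi_stable \<alpha> A" and "\<xi> \<noteq> 0"
  shows "0 < Re (A \<xi>)"
proof (rule ccontr)
  assume "\<not> 0 < Re (A \<xi>)"
  then have "Re (A \<xi>) = 0"
    using Re_levy_symbol_nonneg[OF lp ls] by (simp add: order_less_le)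
  obtain b c where "1 < b" and stab: "stab_rel A (b powr \<alpha>) b c"
    using assms(4) by (rule alpha_semi_stableE)
  have Re_zero: "Re (A ((1 / b) ^ n *\<^sub>R \<xi>)) = 0" for n
  proof (induction n)
    case (Suc n)
    have "Re (A ((1 / b) ^ n *\<^sub>R \<xi>)) = b powr \<alpha> * Re (A ((1 / b) ^ Suc n *\<^sub>R \<xi>))"
      using Re_stab_rel[OF stab, of "(1 / b) ^ Suc n *\<^sub>R \<xi>"] \<open>1 < b\<close> by simp
    with Suc \<open>1 < b\<close> show ?case
      by simp
  qed (use \<open>Re (A \<xi>) = 0\<close> in simp)
  obtain t where "0 < t"
    and not_flat: "\<not> (\<exists>a c. a \<noteq> 0 \<and> measure_support (distr M borel (L t)) \<subseteq> {x. a \<bullet> x = c})"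
    using assms(3) unfolding nondegenerate_def by blast
  have lim: "(\<lambda>n. (1 / b) ^ n) \<longlonglongrightarrow> 0"
    using \<open>1 < b\<close> by (intro LIMSEQ_power_zero) simp
  have "(1 / b) ^ n \<noteq> 0" for n
    using \<open>1 < b\<close> by simp
  then have "\<exists>x. AE \<omega> in M. \<xi> \<bullet> L t \<omega> = x"
    by (rule AE_inner_const_if_Re_levy_symbol_eq_0[OF lp ls less_imp_le[OF \<open>0 < t\<close>] lim _ Re_zero])
  then obtain x where "AE \<omega> in M. \<xi> \<bullet> L t \<omega> = x"
    by blast
  moreover have "L t \<in> borel_measurable M"
    using lp \<open>0 < t\<close> unfolding levy_process_def by auto
  ultimately have "measure_support (distr M borel (L t)) \<subseteq> {y. \<xi> \<bullet> y = x}"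
    by (intro measure_support_distr_subset closed_hyperplane) auto
  with not_flat \<open>\<xi> \<noteq> 0\<close> show False
    by blast
qed

section \<open>Functions homogeneous under one scaling\<close>

definition scale_homogeneous :: "real \<Rightarrow> real \<Rightarrow> ('a::real_vector \<Rightarrow> 'b::real_vector) \<Rightarrow> bool" where
  "scale_homogeneous \<alpha> b G \<longleftrightarrow> (\<forall>u. G (b *\<^sub>R u) = (b powr \<alpha>) *\<^sub>R G u)"

lemma scale_homogeneousD: "scale_homogeneous \<alpha> b G \<Longrightarrow> G (b *\<^sub>R u) = (b powr \<alpha>) *\<^sub>R G u"
  unfolding scale_homogeneous_def by blast

lemma scale_homogeneous_power:
  assumes "scale_homogeneous \<alpha> b G" and "0 < b"
  shows "scale_homogeneous \<alpha> (b ^ n) G"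
  unfolding scale_homogeneous_def
proof (induction n)
  case (Suc n)
  then show ?case
    using assms by (simp add: scale_homogeneousD powr_mult flip: scaleR_scaleR)
qed simp

lemma scale_homogeneous_inverse:
  assumes "scale_homogeneous \<alpha> b G" and "0 < b"
  shows "scale_homogeneous \<alpha> (1 / b) G"
  unfolding scale_homogeneous_def
proof
  fix u
  have "G u = (b powr \<alpha>) *\<^sub>R G ((1 / b) *\<^sub>R u)"
    using assms scale_homogeneousD[OF assms(1), of "(1 / b) *\<^sub>R u"] by simp
  then show "G ((1 / b) *\<^sub>R u) = ((1 / b) powr \<alpha>) *\<^sub>R G u"
    using assms(2) by (simp add: powr_divide)
qed

lemma scale_homogeneous_powr_int:
  assumes "scale_homogeneous \<alpha> b G" and "0 < b"
  shows "scale_homogeneous \<alpha> (b powr of_int k) G"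
proof (cases "0 \<le> k")
  case True
  then obtain n where "k = int n"
    using nonneg_int_cases by blast
  then show ?thesis
    using assms scale_homogeneous_power by (simp add: powr_realpow)
next
  case False
  then obtain n where "k = - int n"
    using nonpos_int_cases by (metis linear)
  then show ?thesis
    using assms scale_homogeneous_inverse[OF scale_homogeneous_power[OF assms]]
    by (simp add: powr_minus_divide powr_realpow)
qed

lemma scale_homogeneous_zero:
  assumes "scale_homogeneous \<alpha> b G" and "0 < b" and "b \<noteq> 1" and "\<alpha> \<noteq> 0"
  shows "G 0 = 0"
proof -
  have "G 0 = (b powr \<alpha>) *\<^sub>R G 0"
    using scale_homogeneousD[OF assms(1), of 0] by simp
  moreover have "b powr \<alpha> \<noteq> 1"
    using assms(2-4) by (simp add: powr_eq_one_iff_gen)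
  ultimately show ?thesis
    by (metis scaleR_cancel_right scaleR_one)
qed

lemma scale_homogeneous_from_annulus:
  fixes G :: "'a::real_normed_vector \<Rightarrow> 'b::real_vector"
  assumes "scale_homogeneous \<alpha> b G" and "1 < b" and "u \<noteq> 0"
  obtains s v where "0 < s" and "u = s *\<^sub>R v" and "1 \<le> norm v" and "norm v \<le> b"
    and "G u = (s powr \<alpha>) *\<^sub>R G v"
proof -
  define k where "k = \<lfloor>log b (norm u)\<rfloor>"
  define s where "s = b powr of_int k"
  have "of_int k \<le> log b (norm u)" "log b (norm u) < of_int k + 1"
    unfolding k_def by linarith+
  then have "s \<le> b powr log b (norm u)" "b powr log b (norm u) < b powr (of_int k + 1)"
    using assms(2) unfolding s_def by (auto intro: powr_mono powr_less_mono)
  then have "s \<le> norm u" "norm u < b * s"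
    using assms(2,3) by (simp_all add: s_def powr_add mult.commute)
  moreover have "0 < s"
    using assms(2) by (simp add: s_def)
  moreover have "G u = (s powr \<alpha>) *\<^sub>R G ((1 / s) *\<^sub>R u)"
    using scale_homogeneousD[OF scale_homogeneous_powr_int[OF assms(1), of k], of "(1 / s) *\<^sub>R u"]
      assms(2) \<open>0 < s\<close> by (simp add: s_def)
  ultimately show ?thesis
    by (intro that[of s "(1 / s) *\<^sub>R u"]) (auto simp: field_simps)
qed

lemma scale_homogeneous_norm_le:
  fixes G :: "'a::euclidean_space \<Rightarrow> 'b::real_normed_vector"
  assumes hom: "scale_homogeneous \<alpha> b G" and "1 < b" and "0 < \<alpha>" and "continuous_on UNIV G"
  obtains C where "0 \<le> C" and "\<And>u. norm (G u) \<le> C * norm u powr \<alpha>"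
proof -
  define K where "K = cball (0::'a) b - ball 0 1"
  have "compact (G ` K)"
    unfolding K_def using assms(4)
    by (intro compact_continuous_image compact_diff) (auto intro: continuous_on_subset)
  then obtain C0 where "\<forall>y\<in>G ` K. norm y \<le> C0"
    using compact_imp_bounded bounded_iff by blast
  then have C0: "\<And>v. v \<in> K \<Longrightarrow> norm (G v) \<le> C0"
    by blast
  define C where "C = max C0 0"
  have "norm (G u) \<le> C * norm u powr \<alpha>" for u
  proof (cases "u = 0")
    case True
    then show ?thesis
      using scale_homogeneous_zero[OF hom] assms(2,3) by simp
  next
    case False
    then obtain s v where "0 < s" "u = s *\<^sub>R v" "v \<in> K" and Gu: "G u = (s powr \<alpha>) *\<^sub>R G v"
      using scale_homogeneous_from_annulus[OF hom assms(2)] unfolding K_def by (metis Diff_iff mem_ball_0 mem_cball_0 not_le)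
    then have "s \<le> norm u"
      using \<open>u = s *\<^sub>R v\<close> by (auto simp: K_def)
    have "norm (G u) = s powr \<alpha> * norm (G v)"
      using Gu by simp
    also have "\<dots> \<le> norm u powr \<alpha> * C"
      using C0[OF \<open>v \<in> K\<close>] \<open>0 < s\<close> \<open>s \<le> norm u\<close> assms(3)
      by (intro mult_mono powr_mono2) (auto simp: C_def)
    finally show ?thesis
      by (simp add: mult.commute)
  qed
  then show ?thesis
    using that[of C] by (simp add: C_def)
qed

lemma scale_homogeneous_ge:
  fixes g :: "'a::euclidean_space \<Rightarrow> real"
  assumes hom: "scale_homogeneous \<alpha> b g" and "1 < b" and "0 < \<alpha>" and "continuous_on UNIV g"
    and pos: "\<And>u. u \<noteq> 0 \<Longrightarrow> 0 < g u"
  obtains c where "0 < c" and "\<And>u. c * norm u powr \<alpha> \<le> g u"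
proof -
  define K where "K = cball (0::'a) b - ball 0 1"
  obtain e :: 'a where "e \<in> Basis"
    using nonempty_Basis by blast
  then have "e \<in> K"
    using assms(2) by (simp add: K_def)
  then obtain x0 where "x0 \<in> K" and x0: "\<And>v. v \<in> K \<Longrightarrow> g x0 \<le> g v"
    using continuous_attains_inf[of K g] assms(4) unfolding K_def
    by (metis compact_cball compact_diff empty_iff open_ball continuous_on_subset subset_UNIV)
  then have "0 < g x0"
    by (intro pos) (auto simp: K_def)
  define c where "c = g x0 / b powr \<alpha>"
  have "c * norm u powr \<alpha> \<le> g u" for u
  proof (cases "u = 0")
    case True
    then show ?thesis
      using scale_homogeneous_zero[OF hom] assms(2,3) by (simp add: c_def)
  next
    case False
    then obtain s v where "0 < s" "u = s *\<^sub>R v" "v \<in> K" and gu: "g u = s powr \<alpha> * g v"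
      using scale_homogeneous_from_annulus[OF hom assms(2)] unfolding K_def by (metis Diff_iff mem_ball_0 mem_cball_0 not_le real_scaleR_def)
    then have "norm u \<le> b * s"
      using \<open>u = s *\<^sub>R v\<close> by (auto simp: K_def)
    have "c * norm u powr \<alpha> \<le> c * (b * s) powr \<alpha>"
      using \<open>0 < g x0\<close> \<open>norm u \<le> b * s\<close> assms(3) by (intro mult_left_mono powr_mono2) (auto simp: c_def)
    also have "\<dots> = g x0 * s powr \<alpha>"
      using assms(2) by (simp add: c_def powr_mult)
    also have "\<dots> \<le> g u"
      using x0[OF \<open>v \<in> K\<close>] \<open>0 < s\<close> gu by (simp add: mult.commute)
    finally show ?thesis .
  qed
  moreover have "0 < c"
    using \<open>0 < g x0\<close> assms(2) by (simp add: c_def)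
  ultimately show ?thesis
    using that by blast
qed

section \<open>The drift\<close>

lemma one_plus_norm_scaleR_powr_le:
  assumes "1 \<le> t" and "0 \<le> \<alpha>"
  shows "(1 + (norm (t *\<^sub>R x))\<^sup>2) powr (\<alpha> / 2) \<le> t powr \<alpha> * (1 + (norm x)\<^sup>2) powr (\<alpha> / 2)"
proof -
  have "1 \<le> t\<^sup>2"
    using assms(1) by (simp add: one_le_power)
  then have "(1 + (norm (t *\<^sub>R x))\<^sup>2) powr (\<alpha> / 2) \<le> (t\<^sup>2 * (1 + (norm x)\<^sup>2)) powr (\<alpha> / 2)"
    using assms by (intro powr_mono2) (auto simp: power_mult_distrib algebra_simps)
  also have "\<dots> = (t\<^sup>2) powr (\<alpha> / 2) * (1 + (norm x)\<^sup>2) powr (\<alpha> / 2)"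
    by (rule powr_mult)
  also have "(t\<^sup>2) powr (\<alpha> / 2) = t powr \<alpha>"
    using assms(1) by (simp add: powr_powr flip: powr_numeral)
  finally show ?thesis .
qed

text \<open>The drift coefficient after \<open>n\<close> steps is \<open>s = \<Sum>k<n. a^(n-1-k) b^k\<close>; only the bound
  \<open>n a^(n-1) \<le> s\<close>, which needs \<open>a \<le> b\<close>, is used.\<close>

lemma stab_rel_iterate:
  assumes stab: "stab_rel A a b c" and "0 < a" and "a \<le> b"
  shows "\<exists>s. real n * a ^ n \<le> a * s \<and>
    (\<forall>u. complex_of_real (a ^ n) * A u = A ((b ^ n) *\<^sub>R u) + \<i> * complex_of_real (s * (c \<bullet> u)))"
proof (induction n)
  case 0
  show ?case
    by (intro exI[of _ 0]) simp
next
  case (Suc n)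
  then obtain s where s: "real n * a ^ n \<le> a * s"
    and eq: "\<And>u. complex_of_real (a ^ n) * A u = A ((b ^ n) *\<^sub>R u) + \<i> * complex_of_real (s * (c \<bullet> u))"
    by blast
  have "a * a ^ n \<le> a * b ^ n" "a * (real n * a ^ n) \<le> a * (a * s)"
    using assms(2,3) s by (auto intro!: mult_left_mono power_mono)
  then have "real (Suc n) * a ^ Suc n \<le> a * (b ^ n + a * s)"
    by (simp add: algebra_simps)
  moreover have "complex_of_real (a ^ Suc n) * A u
      = A ((b ^ Suc n) *\<^sub>R u) + \<i> * complex_of_real ((b ^ n + a * s) * (c \<bullet> u))" for u
  proof -
    have "complex_of_real (a ^ Suc n) * A u = complex_of_real a * (complex_of_real (a ^ n) * A u)"
      by simp
    also have "\<dots> = complex_of_real a * A ((b ^ n) *\<^sub>R u) + \<i> * complex_of_real (a * s * (c \<bullet> u))"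
      unfolding eq by (simp add: algebra_simps)
    also have "complex_of_real a * A ((b ^ n) *\<^sub>R u)
        = A ((b ^ Suc n) *\<^sub>R u) + \<i> * complex_of_real (b ^ n * (c \<bullet> u))"
      using stab[unfolded stab_rel_def, rule_format, of "(b ^ n) *\<^sub>R u"] by simp
    finally show ?thesis
      by (simp add: algebra_simps)
  qed
  ultimately show ?case
    by blast
qed

lemma stab_rel_drift_eq_0:
  fixes A :: "'a::euclidean_space \<Rightarrow> complex"
  assumes stab: "stab_rel A (b powr \<alpha>) b c" and "1 < b" and "0 \<le> \<alpha>" and "\<alpha> \<le> 1"
    and bound: "\<And>u. cmod (A u) \<le> C * (1 + (norm u)\<^sup>2) powr (\<alpha> / 2)"
  shows "c = 0"
proof -
  define a where "a = b powr \<alpha>"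
  have "0 < a" and "a \<le> b"
    using assms(2-4) powr_mono[of \<alpha> 1 b] by (auto simp: a_def)
  have "0 \<le> C"
    using bound[of 0] by (simp add: order.trans[OF norm_ge_zero])
  define K where "K = cmod (A c) + C * (1 + (norm c)\<^sup>2) powr (\<alpha> / 2)"
  have "real n * (norm c)\<^sup>2 \<le> a * K" for n
  proof -
    obtain s where s: "real n * a ^ n \<le> a * s"
      and "complex_of_real (a ^ n) * A c = A ((b ^ n) *\<^sub>R c) + \<i> * complex_of_real (s * (c \<bullet> c))"
      using stab_rel_iterate[OF stab[folded a_def] \<open>0 < a\<close> \<open>a \<le> b\<close>, of n] by blast
    then have eq: "\<i> * complex_of_real (s * (norm c)\<^sup>2) = complex_of_real (a ^ n) * A c - A ((b ^ n) *\<^sub>R c)"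
      by (simp add: power2_norm_eq_inner)
    have "(b ^ n) powr \<alpha> = a ^ n"
      using assms(2) by (simp add: a_def powr_powr mult.commute flip: powr_realpow)
    then have "(1 + (norm ((b ^ n) *\<^sub>R c))\<^sup>2) powr (\<alpha> / 2) \<le> a ^ n * (1 + (norm c)\<^sup>2) powr (\<alpha> / 2)"
      using one_plus_norm_scaleR_powr_le[of "b ^ n" \<alpha> c] assms(2,3) by (simp add: one_le_power)
    then have bound_iterate: "cmod (A ((b ^ n) *\<^sub>R c)) \<le> a ^ n * (C * (1 + (norm c)\<^sup>2) powr (\<alpha> / 2))"
      using bound[of "(b ^ n) *\<^sub>R c"] \<open>0 \<le> C\<close> by (smt (verit, best) mult.left_commute mult_left_mono)
    have "s * (norm c)\<^sup>2 \<le> cmod (\<i> * complex_of_real (s * (norm c)\<^sup>2))"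
      by (metis abs_ge_self mult_1 norm_ii norm_mult norm_of_real)
    also have "\<dots> = cmod (complex_of_real (a ^ n) * A c - A ((b ^ n) *\<^sub>R c))"
      by (simp only: eq)
    also have "\<dots> \<le> a ^ n * cmod (A c) + cmod (A ((b ^ n) *\<^sub>R c))"
      using norm_triangle_ineq4[of "complex_of_real (a ^ n) * A c" "A ((b ^ n) *\<^sub>R c)"] \<open>0 < a\<close>
      by (simp add: norm_mult norm_power)
    also have "\<dots> \<le> a ^ n * K"
      using bound_iterate by (simp add: K_def algebra_simps)
    finally have "s * (norm c)\<^sup>2 \<le> a ^ n * K" .
    then have "real n * a ^ n * (norm c)\<^sup>2 \<le> a ^ n * (a * K)"
      using s mult_right_mono[OF s, of "(norm c)\<^sup>2"] \<open>0 < a\<close>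
      by (smt (verit) mult.assoc mult.left_commute mult_left_mono zero_le_power2)
    then show ?thesis
      using \<open>0 < a\<close> by (simp add: mult.commute mult.left_commute)
  qed
  then have "(norm c)\<^sup>2 \<le> 0"
    using reals_Archimedean2[of "a * K / (norm c)\<^sup>2"] by (metis not_le pos_divide_less_eq)
  then show "c = 0"
    by simp
qed

lemma sobolev_index_stab_rel_drift_eq_0:
  assumes "sobolev_index \<alpha> A" and "\<alpha> \<le> 1" and "stab_rel A (b powr \<alpha>) b c" and "0 < b" and "b \<noteq> 1"
  shows "c = 0"
proof -
  obtain b' c' where "1 < b'" "stab_rel A (b' powr \<alpha>) b' c'" and "c' = 0 \<longleftrightarrow> c = 0"
    using stab_rel_normalize[OF assms(3-5)] by blast
  moreover obtain C where "\<And>u. cmod (A u) \<le> C * (1 + (norm u)\<^sup>2) powr (\<alpha> / 2)" and "0 < \<alpha>"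
    using assms(1) unfolding sobolev_index_def by blast
  ultimately show ?thesis
    using stab_rel_drift_eq_0[of A b' \<alpha> c' C] assms(2) by simp
qed

lemma strictly_alpha_semi_stable_if_sobolev_index:
  assumes "alpha_semi_stable \<alpha> A" and "sobolev_index \<alpha> A" and "\<alpha> \<le> 1"
  shows "strictly_alpha_semi_stable \<alpha> A"
proof -
  obtain b c where "1 < b" and stab: "stab_rel A (b powr \<alpha>) b c"
    using assms(1) by (rule alpha_semi_stableE)
  moreover have "0 < \<alpha>"
    using assms(2) unfolding sobolev_index_def by blast
  ultimately have "stab_rel A (b powr \<alpha>) b 0" and "b powr \<alpha> \<noteq> 1" and "0 < b powr \<alpha>" and "0 < b"
    using sobolev_index_stab_rel_drift_eq_0[OF assms(2,3) stab] by (auto simp: powr_eq_one_iff_gen)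
  then show ?thesis
    using assms(1) unfolding strictly_alpha_semi_stable_def strictly_semi_stable_def by blast
qed

lemma strictly_alpha_stable_if_sobolev_index:
  assumes "alpha_stable \<alpha> A" and "sobolev_index \<alpha> A" and "\<alpha> \<le> 1"
  shows "strictly_alpha_stable \<alpha> A"
  unfolding strictly_alpha_stable_def strictly_stable_def
proof (intro conjI assms(1) allI impI)
  fix a :: real assume "0 < a \<and> a \<noteq> 1"
  then obtain b c where "0 < b" and stab: "stab_rel A a b c" and "a = b powr \<alpha>"
    using assms(1) unfolding alpha_stable_def stable_def stab_Gamma_def by blast
  moreover from this have "b \<noteq> 1"
    using \<open>0 < a \<and> a \<noteq> 1\<close> by auto
  ultimately show "\<exists>b>0. stab_rel A a b 0"
    using sobolev_index_stab_rel_drift_eq_0[OF assms(2,3)] by blast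
qed

lemma scale_homogeneous_stab_rel_shift:
  assumes stab: "stab_rel A (b powr \<alpha>) b c" and "b powr \<alpha> \<noteq> b"
  shows "scale_homogeneous \<alpha> b (\<lambda>u. A u + \<i> * complex_of_real (((1 / (b - b powr \<alpha>)) *\<^sub>R c) \<bullet> u))"
  unfolding scale_homogeneous_def
proof
  fix u
  define d where "d = (1 / (b - b powr \<alpha>)) *\<^sub>R c"
  have "b * (d \<bullet> u) = b powr \<alpha> * (d \<bullet> u) + c \<bullet> u"
    using assms(2) by (simp add: d_def field_simps)
  then show "A (b *\<^sub>R u) + \<i> * complex_of_real (d \<bullet> b *\<^sub>R u) = (b powr \<alpha>) *\<^sub>R (A u + \<i> * complex_of_real (d \<bullet> u))"
    using stab[unfolded stab_rel_def, rule_format, of u]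
    by (simp add: scaleR_conv_of_real algebra_simps)
qed

lemma powr_le_one_plus_square_powr:
  fixes x :: real
  assumes "0 \<le> x" and "0 \<le> \<alpha>"
  shows "x powr \<alpha> \<le> (1 + x\<^sup>2) powr (\<alpha> / 2)"
proof -
  have "x\<^sup>2 = x powr 2"
    using assms(1) by (cases "x = 0") (simp_all add: powr_numeral)
  then have "x powr \<alpha> = (x\<^sup>2) powr (\<alpha> / 2)"
    by (simp add: powr_powr)
  also have "\<dots> \<le> (1 + x\<^sup>2) powr (\<alpha> / 2)"
    using assms(2) by (intro powr_mono2) auto
  finally show ?thesis .
qed

lemma sobolev_indexI:
  fixes A :: "'a::euclidean_space \<Rightarrow> complex"
  assumes "0 < \<alpha>" and "\<alpha> \<le> 2" and "0 < m" and "\<And>u. m * norm u powr \<alpha> \<le> Re (A u)"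
    and "0 \<le> C" and "\<And>u. cmod (A u) \<le> C * (1 + (norm u)\<^sup>2) powr (\<alpha> / 2)"
  shows "sobolev_index \<alpha> A"
  unfolding sobolev_index_def
  using assms by (intro conjI exI[of _ 0] exI[of _ C] exI[of _ m]) auto

lemma sobolev_index_if_stab_rel:
  fixes A :: "'a::euclidean_space \<Rightarrow> complex"
  assumes cont: "continuous_on UNIV A" and pos: "\<And>u. u \<noteq> 0 \<Longrightarrow> 0 < Re (A u)"
    and stab: "stab_rel A (b powr \<alpha>) b c" and "1 < b" and "0 < \<alpha>" and "\<alpha> \<le> 2" and "\<alpha> \<noteq> 1"
    and drift: "c = 0 \<or> 1 \<le> \<alpha>"
  shows "sobolev_index \<alpha> A"
proof -
  have "scale_homogeneous \<alpha> b (\<lambda>u. Re (A u))"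
    using Re_stab_rel[OF stab] by (simp add: scale_homogeneous_def)
  moreover have "continuous_on UNIV (\<lambda>u. Re (A u))"
    by (intro continuous_intros cont)
  ultimately obtain m where "0 < m" and lower: "\<And>u. m * norm u powr \<alpha> \<le> Re (A u)"
    using scale_homogeneous_ge \<open>1 < b\<close> \<open>0 < \<alpha>\<close> pos by blast
  have "b powr \<alpha> \<noteq> b"
    using powr_inj[of b \<alpha> 1] \<open>1 < b\<close> \<open>\<alpha> \<noteq> 1\<close> by simp
  define d where "d = (1 / (b - b powr \<alpha>)) *\<^sub>R c"
  have "scale_homogeneous \<alpha> b (\<lambda>u. A u + \<i> * complex_of_real (d \<bullet> u))"
    unfolding d_def using stab \<open>b powr \<alpha> \<noteq> b\<close> by (rule scale_homogeneous_stab_rel_shift)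
  moreover have "continuous_on UNIV (\<lambda>u. A u + \<i> * complex_of_real (d \<bullet> u))"
    by (intro continuous_intros cont)
  ultimately obtain C where "0 \<le> C" and C: "\<And>u. cmod (A u + \<i> * complex_of_real (d \<bullet> u)) \<le> C * norm u powr \<alpha>"
    using scale_homogeneous_norm_le \<open>1 < b\<close> \<open>0 < \<alpha>\<close> by blast
  have "cmod (A u) \<le> (C + norm d) * (1 + (norm u)\<^sup>2) powr (\<alpha> / 2)" for u
  proof -
    have "cmod (A u) \<le> cmod (A u + \<i> * complex_of_real (d \<bullet> u)) + \<bar>d \<bullet> u\<bar>"
      using norm_triangle_ineq4[of "A u + \<i> * complex_of_real (d \<bullet> u)" "\<i> * complex_of_real (d \<bullet> u)"]
      by (simp add: norm_mult)
    also have "\<dots> \<le> C * norm u powr \<alpha> + norm d * norm u"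
      using C Cauchy_Schwarz_ineq2 by (rule add_mono)
    also have "\<dots> \<le> C * (1 + (norm u)\<^sup>2) powr (\<alpha> / 2) + norm d * (1 + (norm u)\<^sup>2) powr (\<alpha> / 2)"
    proof (rule add_mono)
      show "C * norm u powr \<alpha> \<le> C * (1 + (norm u)\<^sup>2) powr (\<alpha> / 2)"
        using \<open>0 < \<alpha>\<close> \<open>0 \<le> C\<close> by (simp add: powr_le_one_plus_square_powr mult_left_mono)
      show "norm d * norm u \<le> norm d * (1 + (norm u)\<^sup>2) powr (\<alpha> / 2)"
      proof (cases "c = 0")
        case False
        then have "norm u powr 1 \<le> (1 + (norm u)\<^sup>2) powr (1 / 2)"
          using powr_le_one_plus_square_powr[of "norm u" 1] by simp
        also have "\<dots> \<le> (1 + (norm u)\<^sup>2) powr (\<alpha> / 2)"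
          using False drift by (intro powr_mono) auto
        finally show ?thesis
          by (simp add: mult_left_mono)
      qed (simp add: d_def)
    qed
    finally show ?thesis
      by (simp add: algebra_simps)
  qed
  moreover have "0 \<le> C + norm d"
    using \<open>0 \<le> C\<close> by simp
  ultimately show ?thesis
    using sobolev_indexI[OF \<open>0 < \<alpha>\<close> \<open>\<alpha> \<le> 2\<close> \<open>0 < m\<close> lower] by blast
qed

lemma strictly_alpha_stable_1_scaleR:
  assumes "strictly_alpha_stable 1 A" and "0 < a"
  shows "A (a *\<^sub>R u) = complex_of_real a * A u"
proof (cases "a = 1")
  case False
  then obtain b where "0 < b" and stab: "stab_rel A a b 0"
    using assms unfolding strictly_alpha_stable_def strictly_stable_def by blast
  then have "a = b"
    using assms unfolding strictly_alpha_stable_def alpha_stable_def by auto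
  then show ?thesis
    using stab unfolding stab_rel_def by simp
qed simp

lemma real_symbol_eq_if_positively_homogeneous:
  fixes A :: "real \<Rightarrow> complex"
  assumes hom: "\<And>a u. 0 < a \<Longrightarrow> A (a * u) = complex_of_real a * A u"
    and cnj: "\<And>u. A (- u) = cnj (A u)"
  shows "A u = complex_of_real (Re (A 1) * \<bar>u\<bar>) + \<i> * complex_of_real (Im (A 1) * u)"
proof -
  consider "0 < u" | "u = 0" | "u < 0"
    by linarith
  then show ?thesis
  proof cases
    case 1
    then show ?thesis
      using hom[of u 1] by (simp add: complex_eq_iff)
  next
    case 2
    then show ?thesis
      using hom[of 2 0] by simp
  next
    case 3
    then show ?thesis
      using hom[of "- u" "- 1"] cnj[of 1] by (simp add: complex_eq_iff)
  qed
qed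

lemma levy_symbol_strictly_1_stable_eq:
  fixes L :: "real \<Rightarrow> 'w \<Rightarrow> real" and A :: "real \<Rightarrow> complex"
  assumes lp: "levy_process M L" and ls: "levy_symbol M L A" and "nondegenerate M L"
    and "alpha_semi_stable 1 A" and "strictly_alpha_stable 1 A"
  shows "\<exists>c>0. \<exists>\<tau>::real. \<forall>u. A u = complex_of_real (c * \<bar>u\<bar>) + \<i> * complex_of_real (\<tau> * u)"
proof -
  have "0 < Re (A 1)"
    using Re_levy_symbol_pos[OF assms(1-4)] by simp
  moreover have "A u = complex_of_real (Re (A 1) * \<bar>u\<bar>) + \<i> * complex_of_real (Im (A 1) * u)" for u
    using real_symbol_eq_if_positively_homogeneous strictly_alpha_stable_1_scaleR[OF assms(5)]
      levy_symbol_uminus[OF ls] by simp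
  ultimately show ?thesis
    by blast
qed

lemma sobolev_index_1_if_abs_linear:
  fixes A :: "real \<Rightarrow> complex"
  assumes "0 < c" and A: "\<And>u. A u = complex_of_real (c * \<bar>u\<bar>) + \<i> * complex_of_real (\<tau> * u)"
  shows "sobolev_index 1 A"
proof (rule sobolev_indexI)
  fix u :: real
  have "cmod (A u) \<le> (c + \<bar>\<tau>\<bar>) * \<bar>u\<bar>"
    using A[of u] norm_triangle_ineq[of "complex_of_real (c * \<bar>u\<bar>)" "\<i> * complex_of_real (\<tau> * u)"] \<open>0 < c\<close>
    by (simp add: norm_mult abs_mult algebra_simps)
  also have "\<dots> \<le> (c + \<bar>\<tau>\<bar>) * (1 + (norm u)\<^sup>2) powr (1 / 2)"
    using powr_le_one_plus_square_powr[of "\<bar>u\<bar>" 1] \<open>0 < c\<close> by (intro mult_left_mono) auto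
  finally show "cmod (A u) \<le> (c + \<bar>\<tau>\<bar>) * (1 + (norm u)\<^sup>2) powr (1 / 2)" .
qed (use assms in auto)

theorem mainTheorem8:
  fixes M :: "'w measure" and L :: "real \<Rightarrow> 'w \<Rightarrow> 'a::euclidean_space"
    and A :: "'a \<Rightarrow> complex" and \<alpha> :: real
    and M' :: "'v measure" and L' :: "real \<Rightarrow> 'v \<Rightarrow> real" and A' :: "real \<Rightarrow> complex"
  assumes "levy_process M L" and "levy_symbol M L A" and "nondegenerate M L"
    and "alpha_semi_stable \<alpha> A"
  shows "(0 < \<alpha> \<and> \<alpha> < 1 \<longrightarrow> (sobolev_index \<alpha> A \<longleftrightarrow> strictly_alpha_semi_stable \<alpha> A))
     \<and> (1 < \<alpha> \<and> \<alpha> \<le> 2 \<longrightarrow> sobolev_index \<alpha> A)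
     \<and> (levy_process M' L' \<and> levy_symbol M' L' A' \<and> nondegenerate M' L' \<and>
         alpha_semi_stable 1 A' \<and> strictly_alpha_stable 1 A' \<and> sobolev_index 1 A' \<longrightarrow>
         (\<exists>c>0. \<exists>\<tau>::real. \<forall>u. A' u = complex_of_real (c * \<bar>u\<bar>) + \<i> * complex_of_real (\<tau> * u)))
     \<and> (levy_process M' L' \<and> levy_symbol M' L' A' \<and> nondegenerate M' L' \<and>
         alpha_semi_stable 1 A' \<and> alpha_stable 1 A' \<longrightarrow>
         (sobolev_index 1 A' \<longleftrightarrow> strictly_alpha_stable 1 A'))"
proof (intro conjI impI iffI)
  note sobolev = sobolev_index_if_stab_rel[OF levy_symbol_continuous[OF assms(2)] Re_levy_symbol_pos[OF assms]]
  show "strictly_alpha_semi_stable \<alpha> A" if "0 < \<alpha> \<and> \<alpha> < 1" and "sobolev_index \<alpha> A"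
    using that by (intro strictly_alpha_semi_stable_if_sobolev_index[OF assms(4)]) auto
  show "sobolev_index \<alpha> A" if \<alpha>: "0 < \<alpha> \<and> \<alpha> < 1" and strict: "strictly_alpha_semi_stable \<alpha> A"
  proof -
    obtain b where "1 < b" and "stab_rel A (b powr \<alpha>) b 0"
      using strict by (rule strictly_alpha_semi_stableE)
    with \<alpha> show ?thesis
      by (intro sobolev[where b = b and c = 0]) auto
  qed
  show "sobolev_index \<alpha> A" if \<alpha>: "1 < \<alpha> \<and> \<alpha> \<le> 2"
  proof -
    obtain b c where "1 < b" and "stab_rel A (b powr \<alpha>) b c"
      using assms(4) by (rule alpha_semi_stableE)
    with \<alpha> show ?thesis
      by (intro sobolev[where b = b and c = c]) auto
  qed
  show "\<exists>c>0. \<exists>\<tau>::real. \<forall>u. A' u = complex_of_real (c * \<bar>u\<bar>) + \<i> * complex_of_real (\<tau> * u)"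
    if "levy_process M' L' \<and> levy_symbol M' L' A' \<and> nondegenerate M' L' \<and> alpha_semi_stable 1 A' \<and>
      strictly_alpha_stable 1 A' \<and> sobolev_index 1 A'"
    using that by (intro levy_symbol_strictly_1_stable_eq[of M' L']) auto
  show "strictly_alpha_stable 1 A'"
    if "levy_process M' L' \<and> levy_symbol M' L' A' \<and> nondegenerate M' L' \<and> alpha_semi_stable 1 A' \<and>
      alpha_stable 1 A'" and "sobolev_index 1 A'"
    using that by (intro strictly_alpha_stable_if_sobolev_index) auto
  show "sobolev_index 1 A'"
    if levy: "levy_process M' L' \<and> levy_symbol M' L' A' \<and> nondegenerate M' L' \<and> alpha_semi_stable 1 A' \<and>
      alpha_stable 1 A'" and strict: "strictly_alpha_stable 1 A'"
  proof -
    have "\<exists>c>0. \<exists>\<tau>::real. \<forall>u. A' u = complex_of_real (c * \<bar>u\<bar>) + \<i> * complex_of_real (\<tau> * u)"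
      using levy strict by (intro levy_symbol_strictly_1_stable_eq[of M' L']) auto
    then obtain c \<tau> where "0 < c" and "\<And>u. A' u = complex_of_real (c * \<bar>u\<bar>) + \<i> * complex_of_real (\<tau> * u)"
      by blast
    then show ?thesis
      by (rule sobolev_index_1_if_abs_linear)
  qed
qed

end
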